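(* For all non-negative integers $s,k$ with $k\le s$, $$s(s-1)\cdots(s-k+1)\ \ge\ \Big(s-\frac{e-1}{e}\,k\Big)^k.$$ *)

theory Defs
  imports Complex_Main
begin

end

theory Submission
  imports Defs "HOL-Analysis.Analysis"
begin

text \<open>Write \<open>s = m + k\<close>, so the claim reads \<open>(m+1)(m+2) \<dots> (m+k) \<ge> (m + k/e)^k\<close>; it is proved by induction on \<open>k\<close> with \<open>m\<close> fixed. With
  \<open>A = m + k/e\<close>, the induction step needs \<open>(A + 1/e)^(k+1) \<le> (m+k+1) A^k\<close>. Bounding
  \<open>(1 + 1/(eA))^k\<close> by \<open>exp y\<close> with \<open>y = k/(eA) \<in> [0,1]\<close>, this follows from the chord bound
  \<open>exp y \<le> 1 + (e-1) y\<close> (convexity of \<open>exp\<close> on \<open>[0,1]\<close>) applied to \<open>A exp y\<close>, together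
  with \<open>exp y / e \<le> 1\<close>.\<close>

lemma exp_le_chord_01:
  fixes y :: real
  assumes "0 \<le> y" "y \<le> 1"
  shows "exp y \<le> 1 + (exp 1 - 1) * y"
proof -
  have "exp ((1 - y) *\<^sub>R 0 + y *\<^sub>R 1) \<le> (1 - y) * exp 0 + y * exp 1"
    using convex_onD[OF exp_convex, of y 0 1] assms by simp
  then show ?thesis by (simp add: algebra_simps)
qed

lemma one_plus_power_le_exp:
  fixes x :: real
  assumes "-1 \<le> x"
  shows "(1 + x) ^ n \<le> exp (real n * x)"
proof -
  have "(1 + x) ^ n \<le> exp x ^ n"
    using assms by (intro power_mono exp_ge_add_one_self) simp
  then show ?thesis by (simp add: exp_of_nat_mult)
qed

lemma power_step_le:
  fixes m k :: nat
  defines "A \<equiv> real m + real k / exp 1"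
  assumes A_pos: "A > 0"
  shows "(A + 1 / exp 1) ^ Suc k \<le> (real m + real k + 1) * A ^ k"
proof -
  define y where "y = real k / (exp 1 * A)"
  have y_nonneg: "0 \<le> y" using A_pos by (simp add: y_def)
  have "real k \<le> exp 1 * A" unfolding A_def by (simp add: algebra_simps)
  then have y_le_1: "y \<le> 1" using A_pos by (simp add: y_def divide_le_eq)
  have "A + 1 / exp 1 = A * (1 + 1 / (exp 1 * A))"
    using A_pos by (simp add: field_simps)
  then have "(A + 1 / exp 1) ^ k = A ^ k * (1 + 1 / (exp 1 * A)) ^ k"
    by (simp add: power_mult_distrib)
  also have "\<dots> \<le> A ^ k * exp y"
  proof (rule mult_left_mono)
    have "-1 \<le> 1 / (exp 1 * A)"
      using A_pos by (simp add: order.trans[of _ 0])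
    then show "(1 + 1 / (exp 1 * A)) ^ k \<le> exp y"
      using one_plus_power_le_exp[of "1 / (exp 1 * A)" k] by (simp add: y_def)
  qed (use A_pos in simp)
  finally have power_le: "(A + 1 / exp 1) ^ k \<le> A ^ k * exp y" .
  have chord: "A * exp y \<le> A * (1 + (exp 1 - 1) * y)"
    using exp_le_chord_01[OF y_nonneg y_le_1] A_pos by (simp add: mult_left_mono)
  have exp_y_le: "exp y / exp 1 \<le> 1"
    using y_le_1 by simp
  have chord_eq: "A * (1 + (exp 1 - 1) * y) = real m + real k"
  proof -
    have "A * ((exp 1 - 1) * y) = real k - real k / exp 1"
      using A_pos by (simp add: y_def field_simps)
    then show ?thesis by (simp add: A_def algebra_simps)
  qed
  have "(A + 1 / exp 1) * exp y = A * exp y + exp y / exp 1"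
    by (simp add: distrib_right)
  with chord exp_y_le chord_eq
  have factor_le: "(A + 1 / exp 1) * exp y \<le> real m + real k + 1"
    by linarith
  have "(A + 1 / exp 1) ^ Suc k \<le> (A + 1 / exp 1) * (A ^ k * exp y)"
    using power_le A_pos by (simp add: mult_left_mono)
  also have "\<dots> = ((A + 1 / exp 1) * exp y) * A ^ k" by simp
  also have "\<dots> \<le> (real m + real k + 1) * A ^ k"
    using factor_le A_pos by (simp add: mult_right_mono)
  finally show ?thesis .
qed

lemma prod_diff_ge_power:
  fixes m k :: nat
  shows "(\<Prod>i<k. real (m + k - i)) \<ge> (real m + real k / exp 1) ^ k"
proof (induction k)
  case 0
  then show ?case by simp
next
  case (Suc k)
  have prod_Suc: "(\<Prod>i<Suc k. real (m + Suc k - i)) = (real m + real k + 1) * (\<Prod>i<k. real (m + k - i))"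
  proof -
    have "(\<Prod>i<Suc k. real (m + Suc k - i)) = real (m + Suc k - 0) * (\<Prod>i<k. real (m + Suc k - Suc i))"
      by (rule prod.lessThan_Suc_shift)
    then show ?thesis by simp
  qed
  show ?case
  proof (cases "m = 0 \<and> k = 0")
    case True
    then show ?thesis by simp
  next
    case False
    then have pos: "real m + real k / exp 1 > 0"
      by (auto simp: add_pos_nonneg add_nonneg_pos)
    have "(real m + real (Suc k) / exp 1) ^ Suc k = (real m + real k / exp 1 + 1 / exp 1) ^ Suc k"
      by (simp add: add_divide_distrib algebra_simps)
    also have "\<dots> \<le> (real m + real k + 1) * (real m + real k / exp 1) ^ k"
      using power_step_le[of m k] pos by simp
    also have "\<dots> \<le> (real m + real k + 1) * (\<Prod>i<k. real (m + k - i))"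
      by (intro mult_left_mono Suc.IH) simp
    finally show ?thesis unfolding prod_Suc .
  qed
qed

theorem lemma3:
  fixes s k :: nat
  assumes "k \<le> s"
  shows "(\<Prod>i<k. real (s - i)) \<ge> (real s - (exp 1 - 1) / exp 1 * real k) ^ k"
proof -
  define m where "m = s - k"
  have s: "s = m + k" using assms by (simp add: m_def)
  have "real s - (exp 1 - 1) / exp 1 * real k = real m + real k / exp 1"
    by (simp add: s field_simps)
  moreover have "(\<Prod>i<k. real (s - i)) = (\<Prod>i<k. real (m + k - i))"
    by (simp only: s)
  ultimately show ?thesis
    using prod_diff_ge_power[of m k] by simp
qed

end
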